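(* There exists a constant $\delta>0$ depending on the modulus of convexity $m$ of $u$ such that $B_\delta(0)\subset \mathcal{P}(B_R)$. Explicitly, one may take $\delta = \min\left\{ \frac{m_0}{2|Du|_{\partial B_R}},\ \frac{m_0}{2R}\right\}$, where $m_0:=\inf_{\partial B_R}u \geq m(R)$.
   Context: Let $u\in C^4(B_R(0))$ be a convex solution of the Monge-Ampère equation $\det D^2u = f$ in $B_R(0)\subset\mathbb{R}^2$, with $u(0)=0$, $Du(0)=0$, and $0<C_0^{-1}\leq f\leq C_0$. In dimension two such a solution is strictly convex (Aleksandrov, Heinz). Define the injective map $\mathcal{P}: B_R\to\mathbb{R}^2$ by $\mathcal{P}(x)=(u_{x_1}(x), x_2)$ (the coordinate change associated with the partial Legendre transform $u^*(y_1,y_2)=\sup_{x_1}\{x_1y_1-u(x_1,y_2)\}$ in the $e_1$-direction). The modulus of convexity of $u$ is $m(t)=\inf\{u(x)-\ell_z(x): |x-z|>t\}$ for $t>0$, where $\ell_z$ is the supporting function of $u$ at $z$; $m$ is positive by strict convexity. $|Du|_{\partial B_R}$ denotes $\sup_{\partial B_R}|Du|$. *)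

theory Defs
  imports "HOL-Analysis.Analysis"
begin

definition pderiv2 :: "2 \<Rightarrow> (real^2 \<Rightarrow> real) \<Rightarrow> real^2 \<Rightarrow> real" where
  "pderiv2 i g x = frechet_derivative g (at x) (axis i 1)"

fun Ck :: "nat \<Rightarrow> (real^2) set \<Rightarrow> (real^2 \<Rightarrow> real) \<Rightarrow> bool" where
  "Ck 0 S g = continuous_on S g"
| "Ck (Suc k) S g = (continuous_on S g \<and> (\<forall>x\<in>S. g differentiable (at x))
      \<and> (\<forall>i. Ck k S (pderiv2 i g)))"

definition hess2 :: "(real^2 \<Rightarrow> real) \<Rightarrow> real^2 \<Rightarrow> real^2^2" where
  "hess2 g x = (\<chi> i j. pderiv2 j (pderiv2 i g) x)"

text \<open>The map P(x) = (u_{x_1}(x), x_2), with Du the gradient of u.\<close>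
definition Pmap :: "(real^2 \<Rightarrow> real^2) \<Rightarrow> real^2 \<Rightarrow> real^2" where
  "Pmap Du x = (\<chi> i. if i = 1 then Du x $ 1 else x $ 2)"

end

theory Submission
  imports Defs
begin

text \<open>Since \<open>Du 0 = 0\<close>, the tangent plane at the origin gives \<open>u \<ge> 0\<close>. If \<open>u\<close> vanished at
  some \<open>x \<noteq> 0\<close>, convexity would force \<open>u = 0\<close> on the segment from \<open>0\<close> to \<open>x\<close>; every point
  of its interior is then a minimum, so \<open>Du = 0\<close> along it, \<open>x\<close> lies in the kernel of \<open>D\<^sup>2u\<close>
  and \<open>det D\<^sup>2u = f > 0\<close> fails. Hence \<open>m\<^sub>0 > 0\<close>.

  For the image of \<open>P\<close>, take \<open>y\<close> with \<open>|y| < \<delta>\<close> and minimise \<open>u(t, y\<^sub>2) - y\<^sub>1 t\<close> over the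
  horizontal chord of the disc at height \<open>y\<^sub>2\<close>. At the end points it is at least
  \<open>m\<^sub>0 - |y\<^sub>1| R > m\<^sub>0/2\<close>. At the centre it is at most \<open>M |y\<^sub>2| < m\<^sub>0/2\<close>, because the tangent plane
  at a boundary point \<open>p\<close> gives \<open>u(p) \<le> Du(p)\<cdot>p \<le> M R\<close> and convexity carries this linear bound
  inside. So the minimum is interior, and there \<open>u\<^sub>x\<^sub>1 = y\<^sub>1\<close>, i.e. \<open>P(x) = y\<close>.\<close>

lemma convex_on_cball_if_convex_on_ball:
  fixes u :: "'a::real_normed_vector \<Rightarrow> real"
  assumes R: "R > 0" and cvx: "convex_on (ball 0 R) u" and cont: "continuous_on (cball 0 R) u"
  shows "convex_on (cball 0 R) u"
proof (rule convex_onI)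
  fix t :: real and x y :: 'a assume t: "0 < t" "t < 1" and x: "x \<in> cball 0 R" and y: "y \<in> cball 0 R"
  define F where "F s = u (s *\<^sub>R ((1 - t) *\<^sub>R x + t *\<^sub>R y)) - (1 - t) * u (s *\<^sub>R x) - t * u (s *\<^sub>R y)"
    for s :: real
  have scaled_cball: "s *\<^sub>R v \<in> cball 0 R" if "v \<in> cball 0 R" "s \<in> {0..1}" for v :: 'a and s :: real
    using that mult_mono[of s 1 "norm v" R] by auto
  have scaled_ball: "s *\<^sub>R v \<in> ball 0 R" if "v \<in> cball 0 R" "s \<in> {0..<1}" for v :: 'a and s :: real
  proof -
    have "norm (s *\<^sub>R v) \<le> s * R"
      using that by (simp add: mult_left_mono)
    also have "\<dots> < R"
      using that R by simp
    finally show ?thesis by simp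
  qed
  have xy: "(1 - t) *\<^sub>R x + t *\<^sub>R y \<in> cball 0 R"
    using x y t by (intro convexD[OF convex_cball]) auto
  have "continuous_on {0..1} F"
    unfolding F_def by (intro continuous_intros continuous_on_compose2[OF cont]) (auto intro: scaled_cball x y xy)
  then have "(F \<longlongrightarrow> F 1) (at_left 1)"
    by (simp add: continuous_on_Icc_at_leftD)
  moreover have "eventually (\<lambda>s. F s \<le> 0) (at_left 1)"
    using eventually_at_left_real[OF zero_less_one]
  proof (rule eventually_mono)
    fix s :: real assume "s \<in> {0<..<1}"
    then show "F s \<le> 0"
      using convex_onD[OF cvx, of t "s *\<^sub>R x" "s *\<^sub>R y"] t scaled_ball[OF x] scaled_ball[OF y]
      by (simp add: F_def algebra_simps)
  qed
  ultimately have "F 1 \<le> 0"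
    by (intro tendsto_upperbound) (auto simp: trivial_limit_at_left_real)
  then show "u ((1 - t) *\<^sub>R x + t *\<^sub>R y) \<le> (1 - t) * u x + t * u y"
    by (simp add: F_def)
qed simp

lemma convex_on_above_tangent_within:
  fixes u :: "'a::real_normed_vector \<Rightarrow> real"
  assumes cvx: "convex_on S u" and deriv: "(u has_derivative D) (at z within S)"
    and z: "z \<in> S" and w: "w \<in> S"
  shows "u z + D (w - z) \<le> u w"
proof -
  interpret D: bounded_linear D
    using deriv by (rule has_derivative_bounded_linear)
  define l where "l t = z + t *\<^sub>R (w - z)" for t :: real
  have l_convex: "l t = (1 - t) *\<^sub>R z + t *\<^sub>R w" for t
    by (simp add: l_def algebra_simps)
  have "l ` {0..1} \<subseteq> S"
    using cvx z w unfolding convex_on_def by (auto simp: l_convex intro!: convexD)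
  then have "(u has_derivative D) (at (l 0) within l ` {0..1})"
    using has_derivative_subset[OF deriv] by (simp add: l_def)
  moreover have "(l has_derivative (\<lambda>t. t *\<^sub>R (w - z))) (at 0 within {0..1})"
    unfolding l_def by (auto intro!: derivative_eq_intros)
  ultimately have "((\<lambda>t. u (l t)) has_derivative (\<lambda>t. D (t *\<^sub>R (w - z)))) (at 0 within {0..1})"
    using has_derivative_in_compose by blast
  then have "((\<lambda>t. u (l t)) has_real_derivative D (w - z)) (at 0 within {0..1})"
    by (simp add: has_field_derivative_def D.scaleR mult_commute_abs)
  then have "((\<lambda>t. (u (l t) - u (l 0)) / (t - 0)) \<longlongrightarrow> D (w - z)) (at_right 0)"
    by (simp add: has_field_derivative_iff at_within_Icc_at_right)
  moreover have "eventually (\<lambda>t. (u (l t) - u (l 0)) / (t - 0) \<le> u w - u z) (at_right 0)"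
    using eventually_at_right_real[OF zero_less_one]
  proof (rule eventually_mono)
    fix t :: real assume t: "t \<in> {0<..<1}"
    then have "u (l t) - u (l 0) \<le> t * (u w - u z)"
      using convex_onD[OF cvx, of t z w] z w by (simp add: l_convex l_def algebra_simps)
    then show "(u (l t) - u (l 0)) / (t - 0) \<le> u w - u z"
      using t by (simp add: divide_le_eq mult.commute)
  qed
  ultimately have "D (w - z) \<le> u w - u z"
    by (rule tendsto_upperbound) (simp add: trivial_limit_at_right_real)
  then show ?thesis by simp
qed

lemma convex_on_eq_0_on_segment:
  fixes u :: "'a::real_vector \<Rightarrow> real"
  assumes cvx: "convex_on S u" and nonneg: "\<And>x. x \<in> S \<Longrightarrow> 0 \<le> u x"
    and a: "a \<in> S" "u a = 0" and b: "b \<in> S" "u b = 0" and x: "x \<in> closed_segment a b"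
  shows "u x = 0"
proof -
  obtain t where t: "0 \<le> t" "t \<le> 1" and x_eq: "x = (1 - t) *\<^sub>R a + t *\<^sub>R b"
    using x by (auto simp: in_segment)
  have "x \<in> S"
    using cvx a b t unfolding convex_on_def x_eq by (auto intro: convexD)
  then show ?thesis
    using convex_onD[OF cvx t a(1) b(1)] nonneg[of x] a b x_eq by simp
qed

lemma convex_on_cball_le_norm:
  fixes u :: "'a::real_normed_vector \<Rightarrow> real"
  assumes cvx: "convex_on (cball 0 R) u" and u0: "u 0 = 0"
    and sphere: "\<And>p. p \<in> sphere 0 R \<Longrightarrow> u p \<le> M * norm p"
    and x: "x \<in> cball 0 R"
  shows "u x \<le> M * norm x"
proof (cases "x = 0")
  case True
  then show ?thesis
    using u0 by simp
next
  case False
  define s where "s = norm x / R"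
  define p where "p = (R / norm x) *\<^sub>R x"
  have R: "R > 0"
    using x False by (auto intro: order_less_le_trans[of 0 "norm x"])
  have p: "p \<in> sphere 0 R"
    using R False by (simp add: p_def)
  have s: "0 \<le> s" "s \<le> 1"
    using x R by (simp_all add: s_def)
  have "x = (1 - s) *\<^sub>R 0 + s *\<^sub>R p"
    using False R by (simp add: s_def p_def)
  then have "u x \<le> (1 - s) * u 0 + s * u p"
    using convex_onD[OF cvx s, of 0 p] p R by simp
  also have "\<dots> \<le> s * (M * R)"
    using sphere[OF p] p s u0 by (simp add: mult_left_mono)
  also have "\<dots> = M * norm x"
    using R by (simp add: s_def)
  finally show ?thesis .
qed

lemma convex_on_cball_le_gradient_bound:
  fixes u :: "'a::real_inner \<Rightarrow> real"
  assumes cvx: "convex_on (cball 0 R) u" and u0: "u 0 = 0"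
    and Du: "\<And>p. p \<in> sphere 0 R \<Longrightarrow> (u has_derivative (\<lambda>h. Du p \<bullet> h)) (at p within cball 0 R)"
    and bound: "\<And>p. p \<in> sphere 0 R \<Longrightarrow> norm (Du p) \<le> M"
    and x: "x \<in> cball 0 R"
  shows "u x \<le> M * norm x"
proof (rule convex_on_cball_le_norm[OF cvx u0 _ x])
  fix p :: 'a assume p: "p \<in> sphere 0 R"
  then have "u p + Du p \<bullet> (0 - p) \<le> u 0"
    using convex_on_above_tangent_within[OF cvx Du[OF p], of 0] by force
  then have "u p \<le> norm (Du p) * norm p"
    using norm_cauchy_schwarz[of "Du p" p] u0 by simp
  also have "\<dots> \<le> M * norm p"
    using bound[OF p] by (simp add: mult_right_mono)
  finally show "u p \<le> M * norm p" .
qed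

lemma compact_Inf_image_pos:
  fixes f :: "'a::topological_space \<Rightarrow> real"
  assumes "compact S" and "S \<noteq> {}" and "continuous_on S f" and "\<And>x. x \<in> S \<Longrightarrow> 0 < f x"
  shows "0 < Inf (f ` S)"
proof -
  obtain x where x: "x \<in> S" "\<And>y. y \<in> S \<Longrightarrow> f x \<le> f y"
    using continuous_attains_inf[OF assms(1-3)] by blast
  then have "Inf (f ` S) = f x"
    by (intro cInf_eq_minimum) auto
  with x(1) assms(4) show ?thesis
    by simp
qed

lemma compact_image_Inf_Sup_bounds:
  fixes g :: "'a::topological_space \<Rightarrow> real"
  assumes "compact S" and "continuous_on S g" and "x \<in> S"
  shows "Inf (g ` S) \<le> g x" and "g x \<le> Sup (g ` S)"
  using compact_imp_bounded[OF compact_continuous_image[OF assms(2,1)]] assms(3)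
  by (auto intro: cInf_lower cSup_upper bounded_imp_bdd_below bounded_imp_bdd_above)

lemma interior_critical_point_if_less_than_endpoints:
  fixes g :: "real \<Rightarrow> real"
  assumes cont: "continuous_on {a..b} g"
    and deriv: "\<And>t. t \<in> {a<..<b} \<Longrightarrow> (g has_real_derivative g' t) (at t)"
    and c: "c \<in> {a..b}" "g c < g a" "g c < g b"
  shows "\<exists>t\<in>{a<..<b}. g' t = 0"
proof -
  obtain t where t: "t \<in> {a..b}" and min: "\<And>s. s \<in> {a..b} \<Longrightarrow> g t \<le> g s"
    using continuous_attains_inf[OF compact_Icc _ cont] c by auto
  have "t \<noteq> a" "t \<noteq> b"
    using min[OF c(1)] c by auto
  with t have t_inner: "t \<in> {a<..<b}" by auto
  have "\<forall>s. \<bar>t - s\<bar> < min (t - a) (b - t) \<longrightarrow> g t \<le> g s"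
    by (auto intro!: min)
  then have "g' t = 0"
    using t_inner by (intro DERIV_local_min[OF deriv[OF t_inner], of "min (t - a) (b - t)"]) auto
  with t_inner show ?thesis ..
qed

lemma gradient_eq_0_if_local_min:
  fixes u :: "'a::real_inner \<Rightarrow> real"
  assumes "(u has_derivative (\<lambda>h. g \<bullet> h)) (at x)" and "eventually (\<lambda>y. u x \<le> u y) (at x)"
  shows "g = 0"
  using has_derivative_local_min[OF assms] by (metis inner_eq_zero_iff)

lemma frechet_derivative_eq_0_if_constant_on_line:
  fixes g :: "'a::real_normed_vector \<Rightarrow> real"
  assumes diff: "g differentiable (at z)" and e: "e > 0"
    and const: "\<And>s. \<bar>s\<bar> < e \<Longrightarrow> g (z + s *\<^sub>R v) = g z"
  shows "frechet_derivative g (at z) v = 0"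
proof -
  let ?D = "frechet_derivative g (at z)"
  have D: "(g has_derivative ?D) (at z)"
    using diff frechet_derivative_works by blast
  interpret D: bounded_linear ?D
    using D by (rule has_derivative_bounded_linear)
  have "((\<lambda>s. z + s *\<^sub>R v) has_derivative (\<lambda>s. s *\<^sub>R v)) (at 0)"
    by (auto intro!: derivative_eq_intros)
  then have "((\<lambda>s. g (z + s *\<^sub>R v)) has_derivative (\<lambda>s. ?D (s *\<^sub>R v))) (at 0)"
    using has_derivative_compose[of "\<lambda>s. z + s *\<^sub>R v"] D by fastforce
  then have "((\<lambda>s. g (z + s *\<^sub>R v)) has_real_derivative ?D v) (at 0)"
    by (simp add: has_field_derivative_def D.scaleR mult_commute_abs)
  then show ?thesis
    by (rule DERIV_local_const[OF _ e]) (simp add: const)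
qed

lemma pderiv2_eq_gradient:
  assumes "(u has_derivative (\<lambda>h. g \<bullet> h)) (at x)"
  shows "pderiv2 i u x = g $ i"
  unfolding pderiv2_def using frechet_derivative_at[OF assms, symmetric] by (simp add: inner_axis)

lemma Ck_pderiv2_differentiable:
  assumes "Ck k S u" and "2 \<le> k" and "x \<in> S"
  shows "pderiv2 i u differentiable (at x)"
proof -
  obtain j where "k = Suc (Suc j)"
    using \<open>2 \<le> k\<close> by (metis add_2_eq_Suc le_Suc_ex)
  then show ?thesis
    using assms by simp
qed

lemma hess2_mult_vector:
  assumes diff: "\<And>i. pderiv2 i u differentiable (at z)"
  shows "(hess2 u z *v v) $ i = frechet_derivative (pderiv2 i u) (at z) v"
proof -
  have lin: "linear (frechet_derivative (pderiv2 i u) (at z))"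
    using diff frechet_derivative_works has_derivative_linear by blast
  have v: "v = (v $ 1) *\<^sub>R axis 1 1 + (v $ 2) *\<^sub>R axis 2 1"
    by (simp add: vec_eq_iff forall_2 axis_def)
  have "(hess2 u z *v v) $ i = frechet_derivative (pderiv2 i u) (at z) (axis 1 1) * v $ 1
      + frechet_derivative (pderiv2 i u) (at z) (axis 2 1) * v $ 2"
    by (simp add: hess2_def matrix_vector_mult_def sum_2 pderiv2_def[of 1] pderiv2_def[of 2])
  also have "\<dots> = frechet_derivative (pderiv2 i u) (at z) v"
    by (subst (3) v) (simp add: linear_add[OF lin] linear_scale[OF lin] mult.commute)
  finally show ?thesis .
qed

lemma det_hess2_eq_0_if_gradient_constant_on_line:
  assumes diff: "\<And>i. pderiv2 i u differentiable (at z)" and v: "v \<noteq> 0" and e: "e > 0"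
    and const: "\<And>i s. \<bar>s\<bar> < e \<Longrightarrow> pderiv2 i u (z + s *\<^sub>R v) = pderiv2 i u z"
  shows "det (hess2 u z) = 0"
proof -
  have "hess2 u z *v v = 0"
    using hess2_mult_vector[OF diff] frechet_derivative_eq_0_if_constant_on_line[OF diff e const]
    by (simp add: vec_eq_iff)
  then have "\<not> invertible (hess2 u z)"
    using v matrix_left_invertible_ker unfolding invertible_def by blast
  then show ?thesis
    using invertible_det_nz by blast
qed

lemma convex_pos_if_det_hess2_nonzero:
  fixes u :: "real^2 \<Rightarrow> real" and Du :: "real^2 \<Rightarrow> real^2"
  assumes cvx: "convex_on (cball 0 R) u"
    and deriv: "\<And>x. x \<in> ball 0 R \<Longrightarrow> (u has_derivative (\<lambda>h. Du x \<bullet> h)) (at x)"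
    and diff: "\<And>x i. x \<in> ball 0 R \<Longrightarrow> pderiv2 i u differentiable (at x)"
    and det: "\<And>x. x \<in> ball 0 R \<Longrightarrow> det (hess2 u x) \<noteq> 0"
    and u0: "u 0 = 0" and Du0: "Du 0 = 0"
    and x: "x \<in> cball 0 R" "x \<noteq> 0"
  shows "0 < u x"
proof (rule ccontr)
  assume not_pos: "\<not> 0 < u x"
  have R: "0 < R"
    using x by (auto intro: order_less_le_trans[of 0 "norm x"])
  have nonneg: "0 \<le> u y" if "y \<in> cball 0 R" for y
    using convex_on_above_tangent_within[OF cvx has_derivative_at_withinI[OF deriv[of 0]] _ that] R
    by (simp add: u0 Du0)
  have "u x = 0"
    using not_pos nonneg[OF x(1)] by simp
  define z where "z = (1/2) *\<^sub>R x"
  have line: "z + s *\<^sub>R x \<in> ball 0 R" "u (z + s *\<^sub>R x) = 0" if "\<bar>s\<bar> < 1/2" for s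
  proof -
    have z_s: "z + s *\<^sub>R x = (1/2 + s) *\<^sub>R x"
      by (simp add: z_def algebra_simps)
    have "norm (z + s *\<^sub>R x) < norm x"
      using that x(2) by (simp add: z_s)
    then show "z + s *\<^sub>R x \<in> ball 0 R"
      using x(1) by simp
    have "z + s *\<^sub>R x \<in> closed_segment 0 x"
      using that by (auto simp: z_s in_segment intro!: exI[of _ "1/2 + s"])
    then show "u (z + s *\<^sub>R x) = 0"
      using convex_on_eq_0_on_segment[OF cvx nonneg, of 0 x] R x \<open>u x = 0\<close> u0 by simp
  qed
  have pderiv2_0: "pderiv2 i u (z + s *\<^sub>R x) = 0" if "\<bar>s\<bar> < 1/2" for i s
  proof -
    let ?y = "z + s *\<^sub>R x"
    have "eventually (\<lambda>y. y \<in> ball 0 R) (at ?y)"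
      using line(1)[OF that] by (intro eventually_at_in_open') auto
    then have "eventually (\<lambda>y. u ?y \<le> u y) (at ?y)"
      by (rule eventually_mono) (simp add: line(2)[OF that] nonneg)
    then have "Du ?y = 0"
      using gradient_eq_0_if_local_min deriv[OF line(1)[OF that]] by blast
    then show ?thesis
      using pderiv2_eq_gradient[OF deriv[OF line(1)[OF that]]] by simp
  qed
  have z: "z \<in> ball 0 R"
    using line(1)[of 0] by simp
  have "det (hess2 u z) = 0"
    using \<open>x \<noteq> 0\<close> pderiv2_0 pderiv2_0[of 0]
    by (intro det_hess2_eq_0_if_gradient_constant_on_line[where e = "1/2"] diff[OF z]) auto
  with det[OF z] show False ..
qed

lemma norm_power2_real2: "(norm (x :: real^2))\<^sup>2 = (x $ 1)\<^sup>2 + (x $ 2)\<^sup>2"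
  unfolding power2_norm_eq_inner by (simp add: inner_vec_def sum_2 power2_eq_square)

lemma horizontal_chord_in_cball:
  fixes c :: real
  assumes c: "\<bar>c\<bar> < R"
  defines "a \<equiv> sqrt (R\<^sup>2 - c\<^sup>2)"
  shows "0 < a"
    and "\<bar>t\<bar> < a \<Longrightarrow> (vector [t, c] :: real^2) \<in> ball 0 R"
    and "\<bar>t\<bar> = a \<Longrightarrow> (vector [t, c] :: real^2) \<in> sphere 0 R"
proof -
  have "c\<^sup>2 < R\<^sup>2"
    using c by (simp add: power2_strict_mono)
  then show "0 < a"
    by (simp add: a_def)
  then have norm_chord: "(norm (vector [t, c] :: real^2))\<^sup>2 = R\<^sup>2 - (a\<^sup>2 - t\<^sup>2)"
    using \<open>c\<^sup>2 < R\<^sup>2\<close> by (simp add: norm_power2_real2 a_def)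
  have R: "0 \<le> R"
    using c by simp
  show "(vector [t, c] :: real^2) \<in> ball 0 R" if "\<bar>t\<bar> < a"
  proof -
    have "(norm (vector [t, c] :: real^2))\<^sup>2 < R\<^sup>2"
      using that \<open>0 < a\<close> norm_chord power2_strict_mono[of t a] by simp
    then show ?thesis
      using power2_less_imp_less[OF _ R] by simp
  qed
  show "(vector [t, c] :: real^2) \<in> sphere 0 R" if "\<bar>t\<bar> = a"
  proof -
    have "t\<^sup>2 = a\<^sup>2"
      using that by (metis power2_abs)
    then have "(norm (vector [t, c] :: real^2))\<^sup>2 = R\<^sup>2"
      using norm_chord by simp
    then have "norm (vector [t, c] :: real^2) = R"
      using power2_eq_iff_nonneg[OF norm_ge_zero R] by blast
    then show ?thesis
      by simp
  qed
qed

lemma in_Pmap_image_if_chord_center_below_ends: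
  fixes u :: "real^2 \<Rightarrow> real" and Du :: "real^2 \<Rightarrow> real^2"
  assumes cont: "continuous_on (cball 0 R) u"
    and deriv: "\<And>x. x \<in> ball 0 R \<Longrightarrow> (u has_derivative (\<lambda>h. Du x \<bullet> h)) (at x)"
    and y2: "\<bar>y $ 2\<bar> < R"
    and ends: "\<And>p. p \<in> sphere 0 R \<Longrightarrow> p $ 2 = y $ 2 \<Longrightarrow>
      u (vector [0, y $ 2]) < u p - y $ 1 * p $ 1"
  shows "y \<in> Pmap Du ` ball 0 R"
proof -
  define L :: "real \<Rightarrow> real^2" where "L t = vector [t, y $ 2]" for t
  define g where "g t = u (L t) - y $ 1 * t" for t
  define a where "a = sqrt (R\<^sup>2 - (y $ 2)\<^sup>2)"
  note chord = horizontal_chord_in_cball[OF y2, folded a_def L_def]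
  have L_axis: "L = (\<lambda>t. t *\<^sub>R axis 1 1 + (y $ 2) *\<^sub>R axis 2 1)"
    by (simp add: L_def vec_eq_iff forall_2 axis_def fun_eq_iff)
  have "L ` {-a..a} \<subseteq> cball 0 R"
  proof (rule image_subsetI)
    fix t assume "t \<in> {-a..a}"
    then have "\<bar>t\<bar> < a \<or> \<bar>t\<bar> = a"
      by auto
    then show "L t \<in> cball 0 R"
      using chord(2,3) by fastforce
  qed
  then have g_cont: "continuous_on {-a..a} g"
    unfolding g_def L_axis by (intro continuous_intros continuous_on_compose2[OF cont]) auto
  have g_deriv: "(g has_real_derivative Du (L t) $ 1 - y $ 1) (at t)" if "t \<in> {-a<..<a}" for t
  proof -
    have "(L has_derivative (\<lambda>s. s *\<^sub>R axis 1 1)) (at t)"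
      unfolding L_axis by (auto intro!: derivative_eq_intros)
    then have "((\<lambda>t. u (L t)) has_derivative (\<lambda>s. Du (L t) \<bullet> (s *\<^sub>R axis 1 1))) (at t)"
      using that by (intro has_derivative_compose[OF _ deriv] chord(2)) auto
    then have "((\<lambda>t. u (L t)) has_real_derivative Du (L t) $ 1) (at t)"
      by (simp add: has_field_derivative_def inner_axis mult_commute_abs)
    then show ?thesis
      unfolding g_def by (auto intro!: derivative_eq_intros)
  qed
  have g_ends: "g 0 < g (- a)" "g 0 < g a"
    using ends[OF chord(3), of "- a"] ends[OF chord(3), of a] chord(1) by (simp_all add: g_def L_def)
  obtain t where t: "t \<in> {-a<..<a}" "Du (L t) $ 1 - y $ 1 = 0"
    using interior_critical_point_if_less_than_endpoints[OF g_cont g_deriv _ g_ends] chord(1) by auto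
  then have "Pmap Du (L t) = y"
    by (simp add: Pmap_def vec_eq_iff forall_2 L_def)
  with chord(2) t(1) show ?thesis
    by auto
qed

lemma tilted_chord_center_below_end:
  fixes u :: "real^2 \<Rightarrow> real"
  assumes R: "0 < R" and M: "0 < M"
    and upper: "\<And>x. x \<in> cball 0 R \<Longrightarrow> u x \<le> M * norm x"
    and p: "p \<in> sphere 0 R" and lower: "m0 \<le> u p"
    and y1: "\<bar>y $ 1\<bar> < m0 / (2 * R)" and y2: "\<bar>y $ 2\<bar> < m0 / (2 * M)" "\<bar>y $ 2\<bar> \<le> R"
  shows "u (vector [0, y $ 2]) < u p - y $ 1 * p $ 1"
proof -
  have "norm (vector [0, y $ 2] :: real^2) = \<bar>y $ 2\<bar>"
    by (simp add: norm_vec_def L2_set_def sum_2)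
  then have "u (vector [0, y $ 2]) \<le> M * \<bar>y $ 2\<bar>"
    using upper[of "vector [0, y $ 2]"] y2(2) by simp
  also have "\<dots> < m0 / 2"
    using y2(1) M by (simp add: field_simps)
  also have "\<dots> \<le> m0 - \<bar>y $ 1\<bar> * R"
    using y1 R by (simp add: field_simps)
  also have "\<dots> \<le> m0 - \<bar>y $ 1\<bar> * \<bar>p $ 1\<bar>"
    using component_le_norm_cart[of p 1] p by (simp add: mult_left_mono)
  also have "\<dots> \<le> u p - y $ 1 * p $ 1"
    using lower by (simp add: abs_mult[symmetric])
  finally show ?thesis .
qed

lemma ball_subset_Pmap_image:
  fixes u :: "real^2 \<Rightarrow> real" and Du :: "real^2 \<Rightarrow> real^2"
  assumes R: "0 < R" and m0: "0 < m0"
    and cont: "continuous_on (cball 0 R) u"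
    and deriv: "\<And>x. x \<in> ball 0 R \<Longrightarrow> (u has_derivative (\<lambda>h. Du x \<bullet> h)) (at x)"
    and lower: "\<And>p. p \<in> sphere 0 R \<Longrightarrow> m0 \<le> u p"
    and upper: "\<And>x. x \<in> cball 0 R \<Longrightarrow> u x \<le> M * norm x"
  shows "0 < min (m0 / (2 * M)) (m0 / (2 * R))"
    and "ball 0 (min (m0 / (2 * M)) (m0 / (2 * R))) \<subseteq> Pmap Du ` ball 0 R"
proof -
  have "R *\<^sub>R axis 1 1 \<in> sphere (0 :: real^2) R"
    using R by simp
  then have "m0 \<le> M * R"
    using lower upper[of "R *\<^sub>R axis 1 1"] R by fastforce
  then have M: "0 < M"
    using m0 R by (metis not_le mult_nonpos_nonneg less_imp_le order_less_le_trans)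
  then show "0 < min (m0 / (2 * M)) (m0 / (2 * R))"
    using m0 R by simp
  have "m0 / (2 * M) \<le> R / 2"
    using \<open>m0 \<le> M * R\<close> M by (simp add: field_simps)
  show "ball 0 (min (m0 / (2 * M)) (m0 / (2 * R))) \<subseteq> Pmap Du ` ball 0 R"
  proof
    fix y :: "real^2"
    assume "y \<in> ball 0 (min (m0 / (2 * M)) (m0 / (2 * R)))"
    then have y: "\<bar>y $ 1\<bar> < m0 / (2 * R)" "\<bar>y $ 2\<bar> < m0 / (2 * M)"
      using component_le_norm_cart[of y] by (auto intro: le_less_trans)
    with \<open>m0 / (2 * M) \<le> R / 2\<close> R have "\<bar>y $ 2\<bar> < R"
      by linarith
    then show "y \<in> Pmap Du ` ball 0 R"
      using tilted_chord_center_below_end[OF R M upper _ lower y]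
      by (intro in_Pmap_image_if_chord_center_below_ends[OF cont deriv]) auto
  qed
qed

theorem lemma2p1:
  fixes u :: "real^2 \<Rightarrow> real" and Du :: "real^2 \<Rightarrow> real^2"
    and f :: "real^2 \<Rightarrow> real" and R C0 :: real
  assumes R: "R > 0"
    and C4: "Ck 4 (ball 0 R) u"
    and Du: "\<And>x. x \<in> cball 0 R \<Longrightarrow> (u has_derivative (\<lambda>h. Du x \<bullet> h)) (at x within cball 0 R)"
    and Du_cont: "continuous_on (cball 0 R) Du"
    and cvx: "convex_on (ball 0 R) u"
    and MA: "\<And>x. x \<in> ball 0 R \<Longrightarrow> det (hess2 u x) = f x"
    and f_bounds: "0 < inverse C0" "\<And>x. x \<in> ball 0 R \<Longrightarrow> inverse C0 \<le> f x \<and> f x \<le> C0"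
    and u0: "u 0 = 0" and Du0: "Du 0 = 0"
  shows "let m0 = Inf (u ` sphere 0 R);
             M = Sup ((\<lambda>x. norm (Du x)) ` sphere 0 R);
             \<delta> = min (m0 / (2 * M)) (m0 / (2 * R))
         in \<delta> > 0 \<and> ball 0 \<delta> \<subseteq> Pmap Du ` ball 0 R"
proof -
  define m0 where "m0 = Inf (u ` sphere 0 R)"
  define M where "M = Sup ((\<lambda>x. norm (Du x)) ` sphere 0 R)"
  have cont: "continuous_on (cball 0 R) u"
    using Du has_derivative_continuous continuous_on_eq_continuous_within by blast
  have cvx_cball: "convex_on (cball 0 R) u"
    using convex_on_cball_if_convex_on_ball[OF R cvx cont] .
  have deriv: "(u has_derivative (\<lambda>h. Du x \<bullet> h)) (at x)" if "x \<in> ball 0 R" for x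
    using Du[of x] that at_within_interior[of x "cball 0 R"] by simp
  have cont_sphere: "continuous_on (sphere 0 R) u" "continuous_on (sphere 0 R) (\<lambda>x. norm (Du x))"
    using cont continuous_on_norm[OF Du_cont] by (auto elim: continuous_on_subset)
  have "0 < u p" if "p \<in> sphere 0 R" for p
  proof (rule convex_pos_if_det_hess2_nonzero[OF cvx_cball deriv])
    show "pderiv2 i u differentiable (at x)" if "x \<in> ball 0 R" for x i
      using Ck_pderiv2_differentiable[OF C4 _ that] by simp
    show "det (hess2 u x) \<noteq> 0" if "x \<in> ball 0 R" for x
      using MA f_bounds that by force
  qed (use that R u0 Du0 in auto)
  then have m0: "0 < m0"
    unfolding m0_def using R cont_sphere(1) by (intro compact_Inf_image_pos) auto
  have lower: "m0 \<le> u p" if "p \<in> sphere 0 R" for p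
    unfolding m0_def using compact_image_Inf_Sup_bounds(1)[OF _ cont_sphere(1) that] by simp
  have "norm (Du p) \<le> M" if "p \<in> sphere 0 R" for p
    unfolding M_def using compact_image_Inf_Sup_bounds(2)[OF _ cont_sphere(2) that] by simp
  then have upper: "u x \<le> M * norm x" if "x \<in> cball 0 R" for x
    using convex_on_cball_le_gradient_bound[OF cvx_cball u0 Du] that by force
  show ?thesis
    unfolding Let_def m0_def[symmetric] M_def[symmetric]
    using ball_subset_Pmap_image[OF R m0 cont deriv lower upper] by blast
qed

end
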